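(* Let $\mathbf U$ be a group variety. Every finite connected directed graph $\Gamma$ which is minimal, in the minor ordering among finite connected directed graphs, with respect to not having property $\mathrm{P}(\mathbf U)$ (that is, $\Gamma$ does not have $\mathrm{P}(\mathbf U)$, and every connected minor $\Delta$ of $\Gamma$ that does not have $\mathrm{P}(\mathbf U)$ has $\Gamma$ as a minor) is two-edge-connected and has no loops.
   Context: All graphs are finite directed graphs, possibly with loops and multiple edges. A graph $\Gamma$ has vertex set $V(\Gamma)$ and edge set $E(\Gamma)$, and each edge $e$ has an initial vertex $\iota e$ and a terminal vertex $\tau e$; a loop is an edge with $\iota e=\tau e$. A subgraph is regarded as a set of vertices and edges (containing the endpoints of its edges); unions and intersections of subgraphs are taken as sets of vertices and edges. Connectedness and two-edge-connectedness refer to the underlying undirected multigraph (two-edge-connected: connected and remains connected after removing any one edge). Let $\overline{\Gamma}$ be the graph with vertex set $V(\Gamma)$ and edge set $E(\Gamma)\sqcup E(\Gamma)^{-1}$, where for $e\in E(\Gamma)$ the formal edge $e^{-1}$ goes from $\tau e$ to $\iota e$. A path $p$ in $\overline{\Gamma}$ is either an empty path at a vertex or a sequence $e_1\cdots e_n$ of edges of $\overline{\Gamma}$ with $\tau e_i=\iota e_{i+1}$; it has initial vertex $\iota p$ and terminal vertex $\tau p$, and is regarded as a word over the alphabet $E(\Gamma)\cup E(\Gamma)^{-1}$. The span $\langle p\rangle$ is the subgraph of $\Gamma$ consisting of the vertices traversed by $p$ and the edges $e\in E(\Gamma)$ such that $e$ or $e^{-1}$ occurs in $p$. For a group variety $\mathbf{U}$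 and words $u,v$ over $X\cup X^{-1}$, write $u\equiv_{\mathbf U} v$ if $u$ and $v$ represent the same element of the relatively free group of $\mathbf U$ on $X$ (i.e. the identity $u=v$ holds in $\mathbf U$), and $[u]_{\mathbf U}$ for the class of $u$. The free $g\mathbf U$-category on $\Gamma$ has vertex set $V(\Gamma)$; its arrows from $i$ to $j$ are the triples $(i,[p]_{\mathbf U},j)$ with $p$ an $(i,j)$-path in $\overline\Gamma$, and $(i,[p]_{\mathbf U},j)(j,[q]_{\mathbf U},k)=(i,[pq]_{\mathbf U},k)$; for an arrow $x=(i,[p]_{\mathbf U},j)$ put $\iota x=i$, $\tau x=j$. For each arrow $x$ define subgraphs of $\Gamma$: $C_0(x)=\bigcap\{\langle p\rangle : p \text{ a path in }\overline\Gamma \text{ with } (\iota p,[p]_{\mathbf U},\tau p)=x\}$; $P_n(x)$ is the connected component of $C_n(x)$ containing $\iota x$; $C_{n+1}(x)=\bigcap\{P_n(x_1)\cup\cdots\cup P_n(x_k) : k\ge 1,\ x_1,\dots,x_k \text{ arrows with } x_1\cdots x_k=x\}$; and $P(x)=\bigcap_{n\ge 0}P_n(x)$. A connected graph $\Gamma$ has property $\mathrm{P}(\mathbf U)$ if $\tau x\in P(x)$ for every arrow $x$ of the free $g\mathbf U$-category on $\Gamma$. A graph $\Delta$ is a minor of $\Gamma$ if $\Delta$ can be obtained from $\Gamma$ by a finite sequence of the following operations: contracting an edge $e$ with $\iota e\neq\tau e$ (removing $e$ and identifying its two endpoints into one vertex), deleting an edge, deleting a vertex together with its incident edges, and reversing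 the direction of an edge. *)

theory Defs
  imports "Graph_Theory.Graph_Theory"
begin

text \<open>A letter over alphabet X is a pair (x, b); b = False means x, b = True means x^-1.
  Words are lists of letters.  A group variety U is given by a set L of laws
  (pairs of words in countably many variables, indexed by nat); every variety is of this form.
  The relation uequiv L u v means that u and v represent the same element of the
  relatively free group of U on X, i.e. the free group on X modulo the verbal subgroup
  (fully invariant congruence) generated by the laws L.\<close>

type_synonym 'x word = "('x \<times> bool) list"

definition inv_letter :: "'x \<times> bool \<Rightarrow> 'x \<times> bool" where
  "inv_letter l = (fst l, \<not> snd l)"

definition inv_word :: "'x word \<Rightarrow> 'x word" where
  "inv_word w = rev (map inv_letter w)"

definition subst_word :: "(nat \<Rightarrow> 'x word) \<Rightarrow> nat word \<Rightarrow> 'x word" where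
  "subst_word \<sigma> w = concat (map (\<lambda>(n, b). if b then inv_word (\<sigma> n) else \<sigma> n) w)"

inductive uequiv :: "(nat word \<times> nat word) set \<Rightarrow> 'x word \<Rightarrow> 'x word \<Rightarrow> bool"
  for L :: "(nat word \<times> nat word) set" where
  ue_refl: "uequiv L w w"
| ue_sym: "uequiv L u v \<Longrightarrow> uequiv L v u"
| ue_trans: "uequiv L u v \<Longrightarrow> uequiv L v w \<Longrightarrow> uequiv L u w"
| ue_cong: "uequiv L u u' \<Longrightarrow> uequiv L v v' \<Longrightarrow> uequiv L (u @ v) (u' @ v')"
| ue_cancel: "uequiv L [l, inv_letter l] []"
| ue_law: "(p, q) \<in> L \<Longrightarrow> uequiv L (subst_word \<sigma> p) (subst_word \<sigma> q)"

definition lsrc :: "('v,'e) pre_digraph \<Rightarrow> 'e \<times> bool \<Rightarrow> 'v" where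
  "lsrc G l = (if snd l then head G (fst l) else tail G (fst l))"

definition ltgt :: "('v,'e) pre_digraph \<Rightarrow> 'e \<times> bool \<Rightarrow> 'v" where
  "ltgt G l = (if snd l then tail G (fst l) else head G (fst l))"

text \<open>gpath G i p j: p is an (i,j)-path in the doubled graph of G.\<close>
fun gpath :: "('v,'e) pre_digraph \<Rightarrow> 'v \<Rightarrow> 'e word \<Rightarrow> 'v \<Rightarrow> bool" where
  "gpath G i [] j \<longleftrightarrow> i \<in> verts G \<and> i = j"
| "gpath G i (l # p) j \<longleftrightarrow> fst l \<in> arcs G \<and> i \<in> verts G \<and> lsrc G l = i \<and> gpath G (ltgt G l) p j"

type_synonym ('v,'e) sgraph = "'v set \<times> 'e set"

definition sg_Inter :: "('v,'e) sgraph set \<Rightarrow> ('v,'e) sgraph" where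
  "sg_Inter S = (\<Inter> (fst ` S), \<Inter> (snd ` S))"

definition sg_Union :: "('v,'e) sgraph set \<Rightarrow> ('v,'e) sgraph" where
  "sg_Union S = (\<Union> (fst ` S), \<Union> (snd ` S))"

definition span :: "('v,'e) pre_digraph \<Rightarrow> 'v \<Rightarrow> 'e word \<Rightarrow> ('v,'e) sgraph" where
  "span G i p = (insert i (lsrc G ` set p \<union> ltgt G ` set p), fst ` set p)"

definition sg_comp :: "('v,'e) pre_digraph \<Rightarrow> ('v,'e) sgraph \<Rightarrow> 'v \<Rightarrow> ('v,'e) sgraph" where
  "sg_comp G S v =
    (let A = {(tail G e, head G e) | e. e \<in> snd S} \<union> {(head G e, tail G e) | e. e \<in> snd S};
         W = {w \<in> fst S. (v, w) \<in> A\<^sup>*}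
     in (W, {e \<in> snd S. tail G e \<in> W \<and> head G e \<in> W}))"

text \<open>An arrow (i, [p], j) is represented by any triple (i, p, j) with gpath G i p j;
  two triples represent the same arrow iff their endpoints agree and the words are uequiv.\<close>
type_synonym ('v,'e) arrow = "'v \<times> 'e word \<times> 'v"

definition is_arrow :: "('v,'e) pre_digraph \<Rightarrow> ('v,'e) arrow \<Rightarrow> bool" where
  "is_arrow G x \<longleftrightarrow> gpath G (fst x) (fst (snd x)) (snd (snd x))"

definition factorization ::
  "(nat word \<times> nat word) set \<Rightarrow> ('v,'e) pre_digraph \<Rightarrow> ('v,'e) arrow list \<Rightarrow> ('v,'e) arrow \<Rightarrow> bool" where
  "factorization L G ys x \<longleftrightarrow> ys \<noteq> [] \<and> (\<forall>y \<in> set ys. is_arrow G y)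
     \<and> (\<forall>t. Suc t < length ys \<longrightarrow> snd (snd (ys ! t)) = fst (ys ! Suc t))
     \<and> fst (hd ys) = fst x \<and> snd (snd (last ys)) = snd (snd x)
     \<and> uequiv L (concat (map (\<lambda>y. fst (snd y)) ys)) (fst (snd x))"

definition C0 :: "(nat word \<times> nat word) set \<Rightarrow> ('v,'e) pre_digraph \<Rightarrow> ('v,'e) arrow \<Rightarrow> ('v,'e) sgraph" where
  "C0 L G x = sg_Inter {span G (fst x) q | q. gpath G (fst x) q (snd (snd x)) \<and> uequiv L q (fst (snd x))}"

primrec Cn :: "(nat word \<times> nat word) set \<Rightarrow> ('v,'e) pre_digraph \<Rightarrow> nat \<Rightarrow> ('v,'e) arrow \<Rightarrow> ('v,'e) sgraph" where
  "Cn L G 0 x = C0 L G x"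
| "Cn L G (Suc n) x = sg_Inter {sg_Union ((\<lambda>y. sg_comp G (Cn L G n y) (fst y)) ` set ys) | ys. factorization L G ys x}"

definition Pn :: "(nat word \<times> nat word) set \<Rightarrow> ('v,'e) pre_digraph \<Rightarrow> nat \<Rightarrow> ('v,'e) arrow \<Rightarrow> ('v,'e) sgraph" where
  "Pn L G n x = sg_comp G (Cn L G n x) (fst x)"

definition Pinf :: "(nat word \<times> nat word) set \<Rightarrow> ('v,'e) pre_digraph \<Rightarrow> ('v,'e) arrow \<Rightarrow> ('v,'e) sgraph" where
  "Pinf L G x = sg_Inter (range (\<lambda>n. Pn L G n x))"

text \<open>Property P(U) (connectedness of the graph is assumed separately).\<close>
definition propP :: "(nat word \<times> nat word) set \<Rightarrow> ('v,'e) pre_digraph \<Rightarrow> bool" where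
  "propP L G \<longleftrightarrow> (\<forall>x. is_arrow G x \<longrightarrow> snd (snd x) \<in> fst (Pinf L G x))"

definition contract_arc :: "('v,'e) pre_digraph \<Rightarrow> 'e \<Rightarrow> ('v,'e) pre_digraph" where
  "contract_arc G e =
    (let r = (\<lambda>v. if v = head G e then tail G e else v)
     in \<lparr> verts = verts G - {head G e}, arcs = arcs G - {e},
          tail = (\<lambda>a. r (tail G a)), head = (\<lambda>a. r (head G a)) \<rparr>)"

definition reverse_arc :: "('v,'e) pre_digraph \<Rightarrow> 'e \<Rightarrow> ('v,'e) pre_digraph" where
  "reverse_arc G e =
    \<lparr> verts = verts G, arcs = arcs G,
      tail = (\<lambda>a. if a = e then head G e else tail G a),
      head = (\<lambda>a. if a = e then tail G e else head G a) \<rparr>"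

inductive minor_step :: "('v,'e) pre_digraph \<Rightarrow> ('v,'e) pre_digraph \<Rightarrow> bool" where
  ms_contract: "e \<in> arcs G \<Longrightarrow> tail G e \<noteq> head G e \<Longrightarrow> minor_step G (contract_arc G e)"
| ms_del_arc: "e \<in> arcs G \<Longrightarrow> minor_step G (pre_digraph.del_arc G e)"
| ms_del_vert: "v \<in> verts G \<Longrightarrow> minor_step G (pre_digraph.del_vert G v)"
| ms_reverse: "e \<in> arcs G \<Longrightarrow> minor_step G (reverse_arc G e)"

definition is_minor :: "('v,'e) pre_digraph \<Rightarrow> ('v,'e) pre_digraph \<Rightarrow> bool" where
  "is_minor D G \<longleftrightarrow> (\<exists>H. minor_step\<^sup>*\<^sup>* G H \<and> digraph_iso H D)"

definition two_edge_connected :: "('v,'e) pre_digraph \<Rightarrow> bool" where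
  "two_edge_connected G \<longleftrightarrow> connected G \<and> (\<forall>e \<in> arcs G. connected (pre_digraph.del_arc G e))"

end

theory Submission
  imports Defs "HOL-Library.Product_Order"
begin

text \<open>Let e be a loop or a bridge of \<Gamma>, and let \<Delta> be obtained by deleting e (if it is a loop)
  or contracting it (if it is a bridge). Then \<Delta> is a connected minor of \<Gamma> with fewer edges,
  so \<Gamma> is not a minor of \<Delta>, and minimality forces \<Delta> to have P(U). We show that this
  forces \<Gamma> to have P(U) as well.

  Erasing e from paths and identifying its endpoints sends an arrow x of \<Gamma> to an arrow H x
  of \<Delta>, and factorizations to factorizations. By induction on n, P_n(H x) is contained in the
  image of P_n(x); so the end of H x, which lies in P(H x), is the image of a vertex of P_n(x).
  For a loop nothing is identified and we are done. For a bridge the argument only fails if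
  the images of intersections differ from the intersections of images, or if a component
  breaks up, at the identified endpoints of e; this is excluded by the invariant that a
  subgraph C_n(x) or P_n(x) can reach the side of e not containing the start of x only by
  containing e itself, and that it does contain e when x crosses e.\<close>

lemma sg_Inter_eq_Inf: "sg_Inter S = Inf S"
  by (simp add: sg_Inter_def Inf_prod_def)

lemma sg_Union_eq_Sup: "sg_Union S = Sup S"
  by (simp add: sg_Union_def Sup_prod_def)

declare fst_Inf [simp] snd_Inf [simp] fst_Sup [simp] snd_Sup [simp]

definition sg_closed :: "('v,'e) pre_digraph \<Rightarrow> ('v,'e) sgraph \<Rightarrow> bool" where
  "sg_closed G S \<longleftrightarrow> (\<forall>a \<in> snd S. tail G a \<in> fst S \<and> head G a \<in> fst S)"

lemma sg_closed_Inf: "(\<And>S. S \<in> F \<Longrightarrow> sg_closed G S) \<Longrightarrow> sg_closed G (Inf F)"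
  by (auto simp: sg_closed_def)

lemma sg_closed_Sup: "(\<And>S. S \<in> F \<Longrightarrow> sg_closed G S) \<Longrightarrow> sg_closed G (Sup F)"
  unfolding sg_closed_def by (simp, blast)

lemma sg_closed_span: "sg_closed G (span G i p)"
  by (force simp: sg_closed_def span_def lsrc_def ltgt_def)

definition arc_rel :: "('v,'e) pre_digraph \<Rightarrow> 'e set \<Rightarrow> ('v \<times> 'v) set" where
  "arc_rel G E = {(tail G a, head G a) | a. a \<in> E} \<union> {(head G a, tail G a) | a. a \<in> E}"

lemma sg_comp_eq:
  "sg_comp G S v = ({y \<in> fst S. (v, y) \<in> (arc_rel G (snd S))\<^sup>*},
     {a \<in> snd S. tail G a \<in> {y \<in> fst S. (v, y) \<in> (arc_rel G (snd S))\<^sup>*}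
                \<and> head G a \<in> {y \<in> fst S. (v, y) \<in> (arc_rel G (snd S))\<^sup>*}})"
  unfolding sg_comp_def arc_rel_def Let_def by simp

lemma sg_closed_sg_comp: "sg_closed G (sg_comp G S v)"
  by (auto simp: sg_closed_def sg_comp_eq)

lemma sg_comp_le: "sg_comp G S v \<le> S"
  by (auto simp: sg_comp_eq less_eq_prod_def)

lemma start_in_sg_comp: "v \<in> fst S \<Longrightarrow> v \<in> fst (sg_comp G S v)"
  by (simp add: sg_comp_eq)

lemma arc_in_sg_comp:
  assumes "sg_closed G S" "a \<in> snd S"
    and "tail G a \<in> fst (sg_comp G S v) \<or> head G a \<in> fst (sg_comp G S v)"
  shows "a \<in> snd (sg_comp G S v)"
proof -
  have "(tail G a, head G a) \<in> arc_rel G (snd S)" "(head G a, tail G a) \<in> arc_rel G (snd S)"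
    using assms(2) by (auto simp: arc_rel_def)
  moreover have "tail G a \<in> fst S" "head G a \<in> fst S"
    using assms(1,2) by (auto simp: sg_closed_def)
  ultimately show ?thesis
    using assms(2,3) by (auto simp: sg_comp_eq intro: rtrancl_into_rtrancl)
qed

lemma span_Cons:
  "span G (lsrc G l) (l # q) =
     (insert (lsrc G l) (fst (span G (ltgt G l) q)), insert (fst l) (snd (span G (ltgt G l) q)))"
  by (auto simp: span_def)

lemma gpath_end_in_span: "gpath G i q j \<Longrightarrow> j \<in> fst (span G i q)"
proof (induction q arbitrary: i)
  case (Cons l q)
  then show ?case using span_Cons[of G l q] by auto
qed (simp add: span_def)

lemma gpath_span_arcs: "gpath G i q j \<Longrightarrow> snd (span G i q) \<subseteq> arcs G"
proof (induction q arbitrary: i)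
  case (Cons l q)
  then show ?case using span_Cons[of G l q] by auto
qed (simp add: span_def)

section \<open>The subgraphs C_n and P_n\<close>

definition path_spans ::
  "(nat word \<times> nat word) set \<Rightarrow> ('v,'e) pre_digraph \<Rightarrow> ('v,'e) arrow \<Rightarrow> ('v,'e) sgraph set" where
  "path_spans L G z =
     {span G (fst z) q | q. gpath G (fst z) q (snd (snd z)) \<and> uequiv L q (fst (snd z))}"

definition factor_unions :: "(nat word \<times> nat word) set \<Rightarrow> ('v,'e) pre_digraph \<Rightarrow> nat \<Rightarrow>
    ('v,'e) arrow \<Rightarrow> ('v,'e) sgraph set" where
  "factor_unions L G n z = {Sup (Pn L G n ` set ys) | ys. factorization L G ys z}"

lemma Cn_0_eq: "Cn L G 0 z = Inf (path_spans L G z)"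
  by (simp add: C0_def path_spans_def sg_Inter_eq_Inf)

lemma Cn_Suc_eq: "Cn L G (Suc n) z = Inf (factor_unions L G n z)"
  by (simp add: factor_unions_def Pn_def[abs_def] sg_Inter_eq_Inf sg_Union_eq_Sup)

lemma span_in_path_spans: "is_arrow G z \<Longrightarrow> span G (fst z) (fst (snd z)) \<in> path_spans L G z"
  unfolding path_spans_def is_arrow_def by (blast intro: ue_refl)

lemma factorization_singleton: "is_arrow G x \<Longrightarrow> factorization L G [x] x"
  by (simp add: factorization_def ue_refl)

lemma Pn_in_factor_unions:
  assumes "is_arrow G z" shows "Pn L G n z \<in> factor_unions L G n z"
proof -
  have "Pn L G n z = Sup (Pn L G n ` set [z])" by simp
  then show ?thesis
    using factorization_singleton[OF assms] unfolding factor_unions_def by blast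
qed

lemma factorization_arrows: "factorization L G ys z \<Longrightarrow> y \<in> set ys \<Longrightarrow> is_arrow G y"
  by (simp add: factorization_def)

lemma sg_closed_Cn: "sg_closed G (Cn L G n x)"
proof (cases n)
  case 0
  show ?thesis
    unfolding 0 Cn_0_eq by (auto simp: path_spans_def intro!: sg_closed_Inf sg_closed_span)
next
  case (Suc m)
  show ?thesis
    unfolding Suc Cn_Suc_eq
    by (auto simp: factor_unions_def Pn_def intro!: sg_closed_Inf sg_closed_Sup sg_closed_sg_comp)
qed

lemma sg_closed_Pn: "sg_closed G (Pn L G n x)"
  by (simp add: Pn_def sg_closed_sg_comp)

lemma start_in_Cn: "is_arrow G x \<Longrightarrow> fst x \<in> fst (Cn L G n x)"
proof (induction n arbitrary: x)
  case 0
  then show ?case unfolding Cn_0_eq by (auto simp: path_spans_def span_def)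
next
  case (Suc n)
  have "fst x \<in> fst S" if S: "S \<in> factor_unions L G n x" for S
  proof -
    obtain ys where ys: "factorization L G ys x" "S = Sup (Pn L G n ` set ys)"
      using S unfolding factor_unions_def by blast
    then have "hd ys \<in> set ys" "fst x \<in> fst (Pn L G n (hd ys))"
      using Suc.IH[of "hd ys"] start_in_sg_comp[of "fst (hd ys)" "Cn L G n (hd ys)" G]
      by (auto simp: factorization_def Pn_def)
    then show ?thesis using ys(2) by auto
  qed
  then show ?case unfolding Cn_Suc_eq by auto
qed

lemma Cn_arcs: "is_arrow G x \<Longrightarrow> snd (Cn L G n x) \<subseteq> arcs G"
proof (induction n arbitrary: x)
  case 0
  have "snd (span G (fst x) (fst (snd x))) \<subseteq> arcs G"
    using 0 by (simp add: is_arrow_def gpath_span_arcs)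
  then show ?case unfolding Cn_0_eq using span_in_path_spans[OF 0] by auto
next
  case (Suc n)
  have "snd (Pn L G n x) \<subseteq> arcs G"
    using Suc.IH[OF Suc.prems] sg_comp_le[of G "Cn L G n x" "fst x"]
    by (auto simp: Pn_def less_eq_prod_def)
  then show ?case unfolding Cn_Suc_eq using Pn_in_factor_unions[OF Suc.prems] by auto
qed

lemma mem_Pinf_iff: "v \<in> fst (Pinf L G x) \<longleftrightarrow> (\<forall>n. v \<in> fst (Pn L G n x))"
  by (auto simp: Pinf_def sg_Inter_def)

abbreviation erase_arc :: "'e \<Rightarrow> 'e word \<Rightarrow> 'e word" where
  "erase_arc e p \<equiv> filter (\<lambda>l. fst l \<noteq> e) p"

lemma erase_arc_inv_word: "erase_arc e (inv_word w) = inv_word (erase_arc e w)"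
  by (induction w) (auto simp: inv_word_def inv_letter_def)

lemma erase_arc_subst_word: "erase_arc e (subst_word \<sigma> p) = subst_word (\<lambda>n. erase_arc e (\<sigma> n)) p"
  by (induction p) (auto simp: subst_word_def erase_arc_inv_word)

text \<open>Erasing a letter is the substitution e \<mapsto> 1, a homomorphism of free groups;
  it preserves every law of U.\<close>

lemma uequiv_erase_arc: "uequiv L u v \<Longrightarrow> uequiv L (erase_arc e u) (erase_arc e v)"
proof (induction rule: uequiv.induct)
  case (ue_cancel l)
  then show ?case using uequiv.ue_cancel[of L l] by (auto simp: inv_letter_def intro: uequiv.ue_refl)
qed (auto simp: erase_arc_subst_word intro: uequiv.intros)

section \<open>Collapsing an arc\<close>

text \<open>D arises from G by removing the arc e and identifying its head w with its tail u
  via r; this covers both deleting a loop (u = w, r = id) and contracting an arc.\<close>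

locale arc_collapse =
  fixes L :: "(nat word \<times> nat word) set"
    and G D :: "('v,'e) pre_digraph" and e :: 'e and u w :: 'v and r :: "'v \<Rightarrow> 'v"
  assumes e_in: "e \<in> arcs G" and u_def: "u = tail G e" and w_def: "w = head G e"
    and r_def: "r = (\<lambda>v. if v = w then u else v)"
    and arcs_D: "arcs D = arcs G - {e}" and verts_D: "verts D = r ` verts G"
    and tail_D: "\<And>a. tail D a = r (tail G a)" and head_D: "\<And>a. head D a = r (head G a)"
begin

definition collapse_arrow :: "('v,'e) arrow \<Rightarrow> ('v,'e) arrow" where
  "collapse_arrow z = (r (fst z), erase_arc e (fst (snd z)), r (snd (snd z)))"

definition collapse_sg :: "('v,'e) sgraph \<Rightarrow> ('v,'e) sgraph" where
  "collapse_sg S = (r ` fst S, snd S - {e})"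

text \<open>r maps \<Inter>F onto \<Inter>(r ` F) unless some members of F contain only u and others
  only w; this condition excludes that.\<close>

definition coherent_at_ends :: "('v,'e) sgraph set \<Rightarrow> bool" where
  "coherent_at_ends F \<longleftrightarrow>
     (\<forall>S\<in>F. u \<in> fst S \<or> w \<in> fst S) \<longrightarrow> (\<forall>S\<in>F. u \<in> fst S) \<or> (\<forall>S\<in>F. w \<in> fst S)"

lemma r_u [simp]: "r u = u" and r_w [simp]: "r w = u"
  by (simp_all add: r_def)

lemma lsrc_D: "lsrc D l = r (lsrc G l)" and ltgt_D: "ltgt D l = r (ltgt G l)"
  by (simp_all add: lsrc_def ltgt_def tail_D head_D)

lemma gpath_collapse: "gpath G i p j \<Longrightarrow> gpath D (r i) (erase_arc e p) (r j)"
proof (induction p arbitrary: i)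
  case Nil
  then show ?case by (auto simp: verts_D)
next
  case (Cons l p)
  then have l: "fst l \<in> arcs G" "i \<in> verts G" "lsrc G l = i" "gpath G (ltgt G l) p j" by auto
  show ?case
  proof (cases "fst l = e")
    case True
    then have "r i = r (ltgt G l)"
      using l(3) True by (auto simp: lsrc_def ltgt_def r_def u_def w_def)
    then show ?thesis using Cons.IH[OF l(4)] True by simp
  next
    case False
    then show ?thesis using Cons.IH[OF l(4)] l by (simp add: arcs_D verts_D lsrc_D ltgt_D)
  qed
qed

lemma is_arrow_collapse: "is_arrow G z \<Longrightarrow> is_arrow D (collapse_arrow z)"
  by (simp add: is_arrow_def collapse_arrow_def gpath_collapse)

lemma span_collapse_le: "span D (r i) (erase_arc e p) \<le> collapse_sg (span G i p)"
  by (auto simp: less_eq_prod_def span_def collapse_sg_def lsrc_D ltgt_D)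

lemma factorization_collapse:
  assumes "factorization L G ys x"
  shows "factorization L D (map collapse_arrow ys) (collapse_arrow x)"
proof -
  have "concat (map (\<lambda>y. fst (snd (collapse_arrow y))) ys)
      = erase_arc e (concat (map (\<lambda>y. fst (snd y)) ys))"
    by (induction ys) (auto simp: collapse_arrow_def)
  moreover have "uequiv L (erase_arc e (concat (map (\<lambda>y. fst (snd y)) ys)))
      (erase_arc e (fst (snd x)))"
    using assms by (intro uequiv_erase_arc) (simp add: factorization_def)
  ultimately show ?thesis using assms unfolding factorization_def
    by (auto simp: is_arrow_collapse hd_map last_map comp_def) (auto simp: collapse_arrow_def)
qed

lemma Sup_collapse_sg_le: "Sup (collapse_sg ` F) \<le> collapse_sg (Sup F)"
  by (auto simp: less_eq_prod_def collapse_sg_def)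

lemma Inf_collapse_sg_le:
  assumes "F \<noteq> {}" and "coherent_at_ends F"
  shows "Inf (collapse_sg ` F) \<le> collapse_sg (Inf F)"
proof -
  have "y \<in> r ` \<Inter> (fst ` F)" if y: "\<forall>S\<in>F. y \<in> r ` fst S" for y
  proof (cases "y = u")
    case True
    then have "\<forall>S\<in>F. u \<in> fst S \<or> w \<in> fst S"
      using y by (auto simp: r_def split: if_splits)
    then have "(\<forall>S\<in>F. u \<in> fst S) \<or> (\<forall>S\<in>F. w \<in> fst S)"
      using assms(2) by (simp add: coherent_at_ends_def)
    then show ?thesis using True by (metis INT_I image_eqI r_u r_w)
  next
    case False
    then have "y \<in> \<Inter> (fst ` F)" "r y = y"
      using y assms(1) by (auto simp: r_def split: if_splits)
    then show ?thesis by (metis image_eqI)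
  qed
  then show ?thesis using assms(1) by (auto simp: less_eq_prod_def collapse_sg_def)
qed

lemma sg_comp_collapse_le:
  assumes closed: "sg_closed G S" and v: "v \<in> fst S"
    and e_S: "u \<noteq> w \<Longrightarrow> u \<in> fst S \<Longrightarrow> w \<in> fst S \<Longrightarrow> e \<in> snd S"
    and T: "T \<le> collapse_sg S"
  shows "sg_comp D T (r v) \<le> collapse_sg (sg_comp G S v)"
proof -
  define R where "R = arc_rel G (snd S)"
  define W where "W = {y \<in> fst S. (v, y) \<in> R\<^sup>*}"
  have T_arcs: "snd T \<subseteq> snd S - {e}" and T_verts: "fst T \<subseteq> r ` fst S"
    using T by (auto simp: less_eq_prod_def collapse_sg_def)
  text \<open>The component W is saturated for r, since it contains e as soon as it meets both
    of its ends.\<close>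
  have saturated: "z \<in> W" if "y \<in> W" "z \<in> fst S" "r z = r y" for y z
  proof (cases "z = y")
    case False
    then have uw: "{z, y} = {u, w}" "u \<noteq> w"
      using that(3) by (auto simp: r_def split: if_splits)
    then have "e \<in> snd S" using e_S that(1,2) by (auto simp: W_def doubleton_eq_iff)
    then have "(y, z) \<in> R" using uw by (auto simp: R_def arc_rel_def u_def w_def doubleton_eq_iff)
    then show ?thesis using that(1,2) by (auto simp: W_def)
  qed (use that in simp)
  have reach: "\<exists>y'\<in>W. r y' = y" if "(r v, y) \<in> (arc_rel D (snd T))\<^sup>*" for y
    using that
  proof (induction rule: rtrancl_induct)
    case base
    then show ?case using v by (auto simp: W_def)
  next
    case (step y1 y2)
    from step.IH obtain y1' where y1': "y1' \<in> W" "r y1' = y1" by blast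
    from step.hyps(2) obtain a where a: "a \<in> snd T"
      and dir: "(y1, y2) = (r (tail G a), r (head G a)) \<or> (y1, y2) = (r (head G a), r (tail G a))"
      by (auto simp: arc_rel_def tail_D head_D)
    have aS: "a \<in> snd S" using a T_arcs by auto
    have ends: "tail G a \<in> fst S" "head G a \<in> fst S"
      using closed aS by (auto simp: sg_closed_def)
    have "(tail G a, head G a) \<in> R" "(head G a, tail G a) \<in> R"
      using aS by (auto simp: R_def arc_rel_def)
    then have "tail G a \<in> W \<longleftrightarrow> head G a \<in> W"
      using ends by (auto simp: W_def intro: rtrancl_into_rtrancl)
    then show ?case using dir saturated[OF y1'(1)] ends y1'(2) by auto
  qed
  have "a \<in> snd S - {e} \<and> tail G a \<in> W \<and> head G a \<in> W"
    if a: "a \<in> snd T" "(r v, tail D a) \<in> (arc_rel D (snd T))\<^sup>*"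
      "(r v, head D a) \<in> (arc_rel D (snd T))\<^sup>*" for a
  proof -
    have aS: "a \<in> snd S - {e}" using a T_arcs by auto
    have ends: "tail G a \<in> fst S" "head G a \<in> fst S"
      using closed aS by (auto simp: sg_closed_def)
    show ?thesis
      using aS reach[OF a(2)] reach[OF a(3)] saturated ends by (metis tail_D head_D)
  qed
  then show ?thesis
    using reach T_verts unfolding sg_comp_eq less_eq_prod_def collapse_sg_def
    by (auto simp: W_def R_def)
qed

lemma Cn_0_collapse_le:
  assumes z: "is_arrow G z" and coherent: "coherent_at_ends (path_spans L G z)"
  shows "Cn L D 0 (collapse_arrow z) \<le> collapse_sg (Cn L G 0 z)"
proof -
  have "Cn L D 0 (collapse_arrow z) \<le> Inf (collapse_sg ` path_spans L G z)"
  proof (rule Inf_greatest)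
    fix S' assume "S' \<in> collapse_sg ` path_spans L G z"
    then obtain q where q: "gpath G (fst z) q (snd (snd z))" "uequiv L q (fst (snd z))"
      and S': "S' = collapse_sg (span G (fst z) q)"
      by (auto simp: path_spans_def)
    have "span D (r (fst z)) (erase_arc e q) \<in> path_spans L D (collapse_arrow z)"
      using gpath_collapse[OF q(1)] uequiv_erase_arc[OF q(2)]
      by (auto simp: path_spans_def collapse_arrow_def)
    then show "Cn L D 0 (collapse_arrow z) \<le> S'"
      unfolding Cn_0_eq S' using span_collapse_le by (blast intro: Inf_lower order_trans)
  qed
  also have "\<dots> \<le> collapse_sg (Cn L G 0 z)"
    unfolding Cn_0_eq using span_in_path_spans[OF z] coherent
    by (intro Inf_collapse_sg_le) auto
  finally show ?thesis .
qed

lemma Cn_Suc_collapse_le: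
  assumes z: "is_arrow G z"
    and Pn_le: "\<And>y. is_arrow G y \<Longrightarrow> Pn L D n (collapse_arrow y) \<le> collapse_sg (Pn L G n y)"
    and coherent: "coherent_at_ends (factor_unions L G n z)"
  shows "Cn L D (Suc n) (collapse_arrow z) \<le> collapse_sg (Cn L G (Suc n) z)"
proof -
  have "Cn L D (Suc n) (collapse_arrow z) \<le> Inf (collapse_sg ` factor_unions L G n z)"
  proof (rule Inf_greatest)
    fix S' assume "S' \<in> collapse_sg ` factor_unions L G n z"
    then obtain ys where ys: "factorization L G ys z"
      and S': "S' = collapse_sg (Sup (Pn L G n ` set ys))"
      by (auto simp: factor_unions_def)
    have "Sup (Pn L D n ` set (map collapse_arrow ys)) \<in> factor_unions L D n (collapse_arrow z)"
      unfolding factor_unions_def using factorization_collapse[OF ys] by blast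
    then have "Cn L D (Suc n) (collapse_arrow z) \<le> Sup (Pn L D n ` set (map collapse_arrow ys))"
      unfolding Cn_Suc_eq by (rule Inf_lower)
    also have "\<dots> \<le> Sup (collapse_sg ` Pn L G n ` set ys)"
      using Pn_le factorization_arrows[OF ys] by (intro Sup_mono) (simp, blast)
    also have "\<dots> \<le> S'"
      unfolding S' by (rule Sup_collapse_sg_le)
    finally show "Cn L D (Suc n) (collapse_arrow z) \<le> S'" .
  qed
  also have "\<dots> \<le> collapse_sg (Cn L G (Suc n) z)"
    unfolding Cn_Suc_eq using Pn_in_factor_unions[OF z] coherent
    by (intro Inf_collapse_sg_le) auto
  finally show ?thesis .
qed

lemma Pn_collapse_le:
  assumes z: "is_arrow G z"
    and Cn_le: "Cn L D n (collapse_arrow z) \<le> collapse_sg (Cn L G n z)"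
    and e_Cn: "u \<noteq> w \<Longrightarrow> u \<in> fst (Cn L G n z) \<Longrightarrow> w \<in> fst (Cn L G n z) \<Longrightarrow> e \<in> snd (Cn L G n z)"
  shows "Pn L D n (collapse_arrow z) \<le> collapse_sg (Pn L G n z)"
  using sg_comp_collapse_le[OF sg_closed_Cn start_in_Cn[OF z] e_Cn Cn_le]
  by (simp add: Pn_def collapse_arrow_def)

lemma end_in_Pn_up_to_collapse:
  assumes "propP L D" and x: "is_arrow G x"
    and "Pn L D n (collapse_arrow x) \<le> collapse_sg (Pn L G n x)"
  obtains y where "y \<in> fst (Pn L G n x)" and "r y = r (snd (snd x))"
proof -
  have "snd (snd (collapse_arrow x)) \<in> fst (Pn L D n (collapse_arrow x))"
    using assms(1) is_arrow_collapse[OF x] unfolding propP_def mem_Pinf_iff by blast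
  then show ?thesis
    using assms(3) that by (auto simp: less_eq_prod_def collapse_sg_def collapse_arrow_def)
qed

theorem propP_of_collapse_loop:
  assumes loop: "u = w" and "propP L D"
  shows "propP L G"
  unfolding propP_def mem_Pinf_iff
proof (intro allI impI)
  have r_id: "r v = v" for v
    using loop by (simp add: r_def)
  have coherent: "coherent_at_ends F" for F
    unfolding coherent_at_ends_def using loop by simp
  have Pn_le: "Pn L D n (collapse_arrow z) \<le> collapse_sg (Pn L G n z)" if "is_arrow G z" for n z
    using that
  proof (induction n arbitrary: z)
    case 0
    then show ?case using Cn_0_collapse_le Pn_collapse_le loop coherent by blast
  next
    case (Suc n)
    then show ?case using Cn_Suc_collapse_le Pn_collapse_le loop coherent by blast
  qed
  fix x n assume "is_arrow G x"
  then show "snd (snd x) \<in> fst (Pn L G n x)"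
    using end_in_Pn_up_to_collapse[OF assms(2) _ Pn_le] r_id by metis
qed

end

section \<open>Contracting a bridge\<close>

locale bridge_contraction = arc_collapse L G D e u w r
  for L and G :: "('v,'e) pre_digraph" and D e u w r +
  fixes side :: "'v \<Rightarrow> bool"
  assumes side_u: "side u" and side_w: "\<not> side w"
    and side_arc: "\<And>a. a \<in> arcs G \<Longrightarrow> a \<noteq> e \<Longrightarrow> side (tail G a) = side (head G a)"
begin

definition guarded :: "('v,'e) sgraph \<Rightarrow> 'v \<Rightarrow> bool" where
  "guarded S i \<longleftrightarrow> (\<forall>y\<in>fst S. side y \<noteq> side i \<longrightarrow> e \<in> snd S)"

definition crossing :: "('v,'e) arrow \<Rightarrow> bool" where
  "crossing z \<longleftrightarrow> side (fst z) \<noteq> side (snd (snd z))"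

lemma side_letter: "fst l \<in> arcs G \<Longrightarrow> fst l \<noteq> e \<Longrightarrow> side (lsrc G l) = side (ltgt G l)"
  using side_arc by (auto simp: lsrc_def ltgt_def)

lemma guarded_span: "gpath G i q j \<Longrightarrow> guarded (span G i q) i"
proof (induction q arbitrary: i)
  case Nil
  then show ?case by (simp add: guarded_def span_def)
next
  case (Cons l q)
  then have l: "lsrc G l = i" "gpath G (ltgt G l) q j" "fst l \<in> arcs G" by auto
  show ?case
  proof (cases "fst l = e")
    case True
    then show ?thesis using l(1) span_Cons[of G l q] by (simp add: guarded_def)
  next
    case False
    then have "side (ltgt G l) = side i" using side_letter l by metis
    then show ?thesis
      using Cons.IH[OF l(2)] l(1) span_Cons[of G l q] by (auto simp: guarded_def)
  qed
qed

lemma guarded_Inf: "(\<And>S. S \<in> F \<Longrightarrow> guarded S i) \<Longrightarrow> guarded (Inf F) i"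
  by (auto simp: guarded_def)

lemma e_in_guarded: "guarded S i \<Longrightarrow> u \<in> fst S \<Longrightarrow> w \<in> fst S \<Longrightarrow> e \<in> snd S"
  using side_u side_w by (cases "side i") (auto simp: guarded_def)

lemma reach_other_side:
  assumes "(v, y) \<in> (arc_rel G E)\<^sup>*" "side y \<noteq> side v" "E \<subseteq> arcs G"
  shows "e \<in> E \<and> ((v, u) \<in> (arc_rel G E)\<^sup>* \<or> (v, w) \<in> (arc_rel G E)\<^sup>*)"
  using assms(1,2)
proof (induction rule: rtrancl_induct)
  case (step y1 y2)
  show ?case
  proof (cases "side y1 = side v")
    case True
    from step.hyps(2) obtain a where a: "a \<in> E"
      and d: "(y1 = tail G a \<and> y2 = head G a) \<or> (y1 = head G a \<and> y2 = tail G a)"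
      by (auto simp: arc_rel_def)
    have "a = e" using side_arc[of a] a assms(3) d True step.prems by auto
    then show ?thesis using a d step.hyps(1) u_def w_def by auto
  qed (use step.IH in blast)
qed simp

lemma guarded_sg_comp:
  assumes closed: "sg_closed G S" and "snd S \<subseteq> arcs G"
  shows "guarded (sg_comp G S v) v"
  unfolding guarded_def
proof (intro ballI impI)
  fix y assume y: "y \<in> fst (sg_comp G S v)" "side y \<noteq> side v"
  then have "(v, y) \<in> (arc_rel G (snd S))\<^sup>*" by (simp add: sg_comp_eq)
  from reach_other_side[OF this y(2) assms(2)] have e_S: "e \<in> snd S"
    and reach: "(v, u) \<in> (arc_rel G (snd S))\<^sup>* \<or> (v, w) \<in> (arc_rel G (snd S))\<^sup>*"
    by auto
  have "u \<in> fst S" "w \<in> fst S" using closed e_S by (auto simp: sg_closed_def u_def w_def)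
  then have "tail G e \<in> fst (sg_comp G S v) \<or> head G e \<in> fst (sg_comp G S v)"
    using reach by (auto simp: sg_comp_eq u_def w_def)
  then show "e \<in> snd (sg_comp G S v)" by (rule arc_in_sg_comp[OF closed e_S])
qed

lemma guarded_Pn: "is_arrow G z \<Longrightarrow> guarded (Pn L G n z) (fst z)"
  unfolding Pn_def by (rule guarded_sg_comp[OF sg_closed_Cn Cn_arcs])

lemma coherent_at_ends_if_guarded:
  assumes "\<And>S. S \<in> F \<Longrightarrow> guarded S i \<and> sg_closed G S"
  shows "coherent_at_ends F"
  unfolding coherent_at_ends_def
proof
  assume meets: "\<forall>S\<in>F. u \<in> fst S \<or> w \<in> fst S"
  have ends: "u \<in> fst S \<and> w \<in> fst S" if "S \<in> F" "e \<in> snd S" for S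
    using assms[OF that(1)] that(2) by (auto simp: sg_closed_def u_def w_def)
  show "(\<forall>S\<in>F. u \<in> fst S) \<or> (\<forall>S\<in>F. w \<in> fst S)"
    using meets assms ends side_u side_w by (cases "side i") (fastforce simp: guarded_def)+
qed

lemma factorization_without_crossing:
  assumes f: "factorization L G fs z" and no_crossing: "\<forall>y\<in>set fs. \<not> crossing y"
  shows "\<forall>y\<in>set fs. side (fst y) = side (fst z)" and "\<not> crossing z"
proof -
  have start: "side (fst (fs ! t)) = side (fst z)" if "t < length fs" for t
    using that
  proof (induction t)
    case 0
    then show ?case using f by (auto simp: factorization_def hd_conv_nth)
  next
    case (Suc t)
    then have "snd (snd (fs ! t)) = fst (fs ! Suc t)" "\<not> crossing (fs ! t)"
      using f no_crossing by (auto simp: factorization_def)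
    then show ?case using Suc by (auto simp: crossing_def)
  qed
  then show same_side: "\<forall>y\<in>set fs. side (fst y) = side (fst z)"
    by (metis in_set_conv_nth)
  have "last fs \<in> set fs" "snd (snd (last fs)) = snd (snd z)"
    using f by (auto simp: factorization_def)
  then show "\<not> crossing z"
    using same_side no_crossing by (metis crossing_def)
qed

lemma e_in_Pn_if_crossing:
  assumes "propP L D" and z: "is_arrow G z" and "crossing z"
    and e_Cn: "e \<in> snd (Cn L G n z)"
    and Pn_le: "Pn L D n (collapse_arrow z) \<le> collapse_sg (Pn L G n z)"
  shows "e \<in> snd (Pn L G n z)"
proof -
  obtain y where y: "y \<in> fst (Pn L G n z)" "r y = r (snd (snd z))"
    using end_in_Pn_up_to_collapse[OF assms(1) z Pn_le] .
  show ?thesis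
  proof (cases "side y = side (fst z)")
    case False
    then show ?thesis using guarded_Pn[OF z] y(1) by (auto simp: guarded_def)
  next
    case True
    then have "y \<noteq> snd (snd z)" using \<open>crossing z\<close> by (auto simp: crossing_def)
    then have "y = u \<or> y = w" using y(2) by (auto simp: r_def split: if_splits)
    then have "tail G e \<in> fst (Pn L G n z) \<or> head G e \<in> fst (Pn L G n z)"
      using y(1) u_def w_def by auto
    then show ?thesis unfolding Pn_def by (rule arc_in_sg_comp[OF sg_closed_Cn e_Cn])
  qed
qed

lemma path_spans_guarded:
  assumes "S \<in> path_spans L G z"
  shows "guarded S (fst z) \<and> sg_closed G S \<and> (crossing z \<longrightarrow> e \<in> snd S)"
  using assms guarded_span gpath_end_in_span sg_closed_span
  by (fastforce simp: path_spans_def guarded_def crossing_def)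

lemma factor_unions_guarded:
  assumes crossing_Pn: "\<And>y. is_arrow G y \<Longrightarrow> crossing y \<Longrightarrow> e \<in> snd (Pn L G n y)"
    and "S \<in> factor_unions L G n z"
  shows "guarded S (fst z) \<and> sg_closed G S \<and> (crossing z \<longrightarrow> e \<in> snd S)"
proof -
  obtain fs where fs: "factorization L G fs z" and S: "S = Sup (Pn L G n ` set fs)"
    using assms(2) unfolding factor_unions_def by blast
  have arrows: "is_arrow G y" if "y \<in> set fs" for y
    using factorization_arrows[OF fs that] .
  have e_S_if_crossing: "e \<in> snd S" if "y \<in> set fs" "crossing y" for y
    using S that(1) crossing_Pn[OF arrows[OF that(1)] that(2)] by auto
  have "guarded S (fst z)"
    unfolding guarded_def
  proof (intro ballI impI)
    fix v assume v: "v \<in> fst S" "side v \<noteq> side (fst z)"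
    then obtain y where y: "y \<in> set fs" "v \<in> fst (Pn L G n y)" using S by auto
    show "e \<in> snd S"
    proof (cases "side v = side (fst y)")
      case False
      then show ?thesis
        using guarded_Pn[OF arrows[OF y(1)], of n] y S by (auto simp: guarded_def)
    next
      case True
      then show ?thesis
        using factorization_without_crossing(1)[OF fs] e_S_if_crossing y(1) v(2) by metis
    qed
  qed
  moreover have "sg_closed G S"
    unfolding S by (rule sg_closed_Sup) (auto simp: sg_closed_Pn)
  moreover have "crossing z \<longrightarrow> e \<in> snd S"
    using factorization_without_crossing(2)[OF fs] e_S_if_crossing by blast
  ultimately show ?thesis by blast
qed

text \<open>Both conjuncts must be carried through the induction together: the inclusion at
  level n + 1 needs the second conjunct at level n.\<close>

definition sound_at :: "nat \<Rightarrow> ('v,'e) arrow \<Rightarrow> bool" where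
  "sound_at n z \<longleftrightarrow> Pn L D n (collapse_arrow z) \<le> collapse_sg (Pn L G n z)
     \<and> (crossing z \<longrightarrow> e \<in> snd (Pn L G n z))"

lemma sound_at_if_Cn_guarded:
  assumes "propP L D" and z: "is_arrow G z"
    and Cn_eq: "Cn L G n z = Inf F"
    and family: "\<And>S. S \<in> F \<Longrightarrow> guarded S (fst z) \<and> sg_closed G S \<and> (crossing z \<longrightarrow> e \<in> snd S)"
    and Cn_le: "coherent_at_ends F \<Longrightarrow> Cn L D n (collapse_arrow z) \<le> collapse_sg (Cn L G n z)"
  shows "sound_at n z"
proof -
  have guarded_Cn: "guarded (Cn L G n z) (fst z)"
    unfolding Cn_eq using family by (blast intro: guarded_Inf)
  have "Pn L D n (collapse_arrow z) \<le> collapse_sg (Pn L G n z)"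
    using Pn_collapse_le[OF z Cn_le] coherent_at_ends_if_guarded family e_in_guarded[OF guarded_Cn]
    by blast
  moreover have "crossing z \<longrightarrow> e \<in> snd (Cn L G n z)"
    unfolding Cn_eq using family by auto
  ultimately show ?thesis
    using e_in_Pn_if_crossing[OF assms(1) z] by (auto simp: sound_at_def)
qed

lemma sound_at_all:
  assumes "propP L D"
  shows "is_arrow G z \<Longrightarrow> sound_at n z"
proof (induction n arbitrary: z)
  case 0
  show ?case
    using sound_at_if_Cn_guarded[OF assms 0 Cn_0_eq path_spans_guarded Cn_0_collapse_le[OF 0]] .
next
  case (Suc n)
  have Pn_le: "Pn L D n (collapse_arrow y) \<le> collapse_sg (Pn L G n y)"
    and crossing_Pn: "crossing y \<Longrightarrow> e \<in> snd (Pn L G n y)" if "is_arrow G y" for y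
    using Suc.IH[OF that] by (simp_all add: sound_at_def)
  show ?case
    by (rule sound_at_if_Cn_guarded[OF assms Suc.prems Cn_Suc_eq
          factor_unions_guarded[OF crossing_Pn] Cn_Suc_collapse_le[OF Suc.prems Pn_le]])
qed

theorem propP_of_bridge_contraction:
  assumes "propP L D"
  shows "propP L G"
  unfolding propP_def mem_Pinf_iff
proof (intro allI impI)
  fix x n assume x: "is_arrow G x"
  have sound: "sound_at n x" by (rule sound_at_all[OF assms x])
  then obtain y where y: "y \<in> fst (Pn L G n x)" "r y = r (snd (snd x))"
    using end_in_Pn_up_to_collapse[OF assms x] by (auto simp: sound_at_def)
  show "snd (snd x) \<in> fst (Pn L G n x)"
  proof (cases "y = snd (snd x)")
    case False
    then have ends: "(y = u \<and> snd (snd x) = w) \<or> (y = w \<and> snd (snd x) = u)"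
      using y(2) by (auto simp: r_def split: if_splits)
    have "e \<in> snd (Pn L G n x)"
    proof (cases "crossing x")
      case True
      then show ?thesis using sound by (simp add: sound_at_def)
    next
      case False
      then have "side y \<noteq> side (fst x)" using ends side_u side_w by (auto simp: crossing_def)
      then show ?thesis using guarded_Pn[OF x] y(1) by (auto simp: guarded_def)
    qed
    then have "u \<in> fst (Pn L G n x) \<and> w \<in> fst (Pn L G n x)"
      using sg_closed_Pn[of G L n x] by (auto simp: sg_closed_def u_def w_def)
    then show ?thesis using ends by auto
  qed (use y in simp)
qed

end

section \<open>Minors and connectivity\<close>

definition undirected_adj :: "('v,'e) pre_digraph \<Rightarrow> ('v \<times> 'v) set" where
  "undirected_adj G = (\<Union>a\<in>arcs G. {(tail G a, head G a), (head G a, tail G a)})"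

lemma connected_iff_undirected_reach:
  "connected G \<longleftrightarrow> verts G \<noteq> {} \<and>
     (\<forall>a\<in>verts G. \<forall>b\<in>verts G. (a, b) \<in> rtrancl_on (verts G) (undirected_adj G))"
  by (simp add: connected_def strongly_connected_def reachable_def mk_symmetric_def undirected_adj_def)

lemma undirected_reach_sym:
  "(a, b) \<in> rtrancl_on V (undirected_adj G) \<Longrightarrow> (b, a) \<in> rtrancl_on V (undirected_adj G)"
  using rtrancl_on_sym[of "undirected_adj G" V] by (auto simp: sym_def undirected_adj_def)

lemma connected_del_arc_if_ends_reachable:
  assumes "connected G"
    and ends: "(tail G e, head G e) \<in> rtrancl_on (verts G) (undirected_adj (pre_digraph.del_arc G e))"
  shows "connected (pre_digraph.del_arc G e)"
proof -
  let ?R = "rtrancl_on (verts G) (undirected_adj (pre_digraph.del_arc G e))"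
  have "(a, b) \<in> ?R" if "(a, b) \<in> rtrancl_on (verts G) (undirected_adj G)" for a b
    using that
  proof (induction rule: rtrancl_on_induct)
    case (step y z)
    then obtain c where c: "c \<in> arcs G"
      and yz: "(y, z) = (tail G c, head G c) \<or> (y, z) = (head G c, tail G c)"
      by (auto simp: undirected_adj_def)
    show ?case
    proof (cases "c = e")
      case True
      then have "(y, z) \<in> ?R" using yz ends undirected_reach_sym by auto
      then show ?thesis using step.IH rtrancl_on_trans by metis
    next
      case False
      then have "(y, z) \<in> undirected_adj (pre_digraph.del_arc G e)"
        using c yz by (auto simp: undirected_adj_def pre_digraph.del_arc_simps)
      then show ?thesis using step by (auto intro: rtrancl_on_into_rtrancl_on)
    qed
  qed simp
  then show ?thesis
    using assms(1) by (simp add: connected_iff_undirected_reach pre_digraph.del_arc_simps)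
qed

lemma digraph_iso_refl: "wf_digraph H \<Longrightarrow> digraph_iso H H"
  unfolding digraph_iso_def
  by (rule exI[of _ "\<lparr>iso_verts = id, iso_arcs = id, iso_head = head H, iso_tail = tail H\<rparr>"])
    (simp add: pre_digraph.digraph_isomorphism_def app_iso_def)

lemma is_minor_if_minor_step: "minor_step G D \<Longrightarrow> wf_digraph D \<Longrightarrow> is_minor D G"
  unfolding is_minor_def using digraph_iso_refl by blast

lemma minor_steps_arcs_subset: "minor_step\<^sup>*\<^sup>* G H \<Longrightarrow> arcs H \<subseteq> arcs G"
proof (induction rule: rtranclp_induct)
  case (step H H')
  from step.hyps(2) have "arcs H' \<subseteq> arcs H"
    by (induction rule: minor_step.induct)
      (auto simp: contract_arc_def reverse_arc_def pre_digraph.del_arc_def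
        pre_digraph.del_vert_def Let_def)
  then show ?case using step.IH by blast
qed simp

lemma is_minor_card_arcs_le:
  assumes "is_minor G D" and "finite (arcs D)"
  shows "card (arcs G) \<le> card (arcs D)"
proof -
  obtain H f where H: "minor_step\<^sup>*\<^sup>* D H" and G: "G = app_iso f H"
    using assms(1) by (auto simp: is_minor_def digraph_iso_def)
  have "arcs H \<subseteq> arcs D" by (rule minor_steps_arcs_subset[OF H])
  moreover have "card (arcs G) \<le> card (arcs H)"
    unfolding G by (simp add: card_image_le finite_subset[OF calculation assms(2)])
  ultimately show ?thesis using assms(2) card_mono by (blast intro: order_trans)
qed

context wf_digraph
begin

lemma wf_digraph_contract_arc:
  assumes "e \<in> arcs G" "tail G e \<noteq> head G e"
  shows "wf_digraph (contract_arc G e)"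
  using assms by unfold_locales (auto simp: contract_arc_def Let_def)

lemma connected_contract_arc:
  assumes "connected G" and e: "e \<in> arcs G" "tail G e \<noteq> head G e"
  shows "connected (contract_arc G e)"
proof -
  define r where "r = (\<lambda>v. if v = head G e then tail G e else v)"
  have verts_D: "verts (contract_arc G e) = r ` verts G"
    using e by (auto simp: contract_arc_def r_def image_iff)
  have "(r a, r b) \<in> rtrancl_on (verts (contract_arc G e)) (undirected_adj (contract_arc G e))"
    if "(a, b) \<in> rtrancl_on (verts G) (undirected_adj G)" for a b
    using that
  proof (induction rule: rtrancl_on_induct)
    case base
    then show ?case using verts_D by simp
  next
    case (step y z)
    then obtain c where c: "c \<in> arcs G"
      and yz: "(y, z) = (tail G c, head G c) \<or> (y, z) = (head G c, tail G c)"
      by (auto simp: undirected_adj_def)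
    show ?case
    proof (cases "c = e")
      case True
      then have "r y = r z" using yz by (auto simp: r_def)
      then show ?thesis using step.IH by simp
    next
      case False
      then have "(r y, r z) \<in> undirected_adj (contract_arc G e)"
        using c yz by (auto simp: undirected_adj_def contract_arc_def Let_def r_def)
      moreover have "r z \<in> verts (contract_arc G e)" using verts_D step.hyps by auto
      ultimately show ?thesis using step.IH by (auto intro: rtrancl_on_into_rtrancl_on)
    qed
  qed
  moreover have "a \<in> verts G \<and> r a = a" if "a \<in> verts (contract_arc G e)" for a
    using that by (auto simp: contract_arc_def r_def)
  moreover have "verts (contract_arc G e) \<noteq> {}"
    using tail_in_verts[OF e(1)] verts_D by auto
  ultimately show ?thesis
    using assms(1) unfolding connected_iff_undirected_reach by metis
qed

end

definition minimal_without_propP :: "(nat word \<times> nat word) set \<Rightarrow> ('v,'e) pre_digraph \<Rightarrow> bool" where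
  "minimal_without_propP L G \<longleftrightarrow> \<not> propP L G \<and>
     (\<forall>D :: ('v,'e) pre_digraph. is_minor D G \<and> connected D \<and> \<not> propP L D \<longrightarrow> is_minor G D)"

context fin_digraph
begin

lemma propP_of_minimal:
  assumes minimal: "minimal_without_propP L G"
    and "minor_step G D" "wf_digraph D" "connected D"
    and e: "e \<in> arcs G" "arcs D = arcs G - {e}"
  shows "propP L D"
proof (rule ccontr)
  assume "\<not> propP L D"
  then have "is_minor G D"
    using minimal is_minor_if_minor_step assms(2-4) unfolding minimal_without_propP_def by blast
  then have "card (arcs G) \<le> card (arcs D)"
    using e by (intro is_minor_card_arcs_le) auto
  moreover have "card (arcs D) < card (arcs G)"
    using card_Diff1_less[OF finite_arcs e(1)] e(2) by simp
  ultimately show False by simp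
qed

lemma minimal_without_propP_no_loop:
  assumes "connected G" and minimal: "minimal_without_propP L G"
    and e: "e \<in> arcs G"
  shows "tail G e \<noteq> head G e"
proof
  assume loop: "tail G e = head G e"
  text \<open>With r given literally as \<open>\<lambda>v. v\<close>, the interpreted simp rule \<open>r w = u\<close> would
    become \<open>head G e = tail G e\<close> and make the simplifier loop together with the hypothesis.\<close>
  interpret arc_collapse L G "del_arc e" e "tail G e" "head G e"
      "\<lambda>v. if v = head G e then tail G e else v"
    using e loop by unfold_locales auto
  have "(tail G e, head G e) \<in> rtrancl_on (verts G) (undirected_adj (del_arc e))"
    using loop tail_in_verts[OF e] by simp
  then have "connected (del_arc e)"
    by (rule connected_del_arc_if_ends_reachable[OF assms(1)])
  then have "propP L (del_arc e)"
    by (rule propP_of_minimal[OF minimal ms_del_arc[OF e] wf_digraph_del_arc _ e]) simp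
  then show False
    using propP_of_collapse_loop loop minimal by (simp add: minimal_without_propP_def)
qed

lemma minimal_without_propP_no_bridge:
  assumes "connected G" and minimal: "minimal_without_propP L G"
    and e: "e \<in> arcs G" "tail G e \<noteq> head G e"
  shows "connected (del_arc e)"
proof (rule ccontr)
  assume bridge: "\<not> connected (del_arc e)"
  define side where "side v \<longleftrightarrow> (tail G e, v) \<in> rtrancl_on (verts G) (undirected_adj (del_arc e))" for v
  have "side (tail G a) = side (head G a)" if "a \<in> arcs G" "a \<noteq> e" for a
  proof -
    have "(tail G a, head G a) \<in> undirected_adj (del_arc e)"
      "(head G a, tail G a) \<in> undirected_adj (del_arc e)"
      using that by (auto simp: undirected_adj_def)
    then show ?thesis
      using that(1) by (auto simp: side_def intro: rtrancl_on_into_rtrancl_on)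
  qed
  moreover have "\<not> side (head G e)"
    using connected_del_arc_if_ends_reachable[OF assms(1)] bridge by (auto simp: side_def)
  ultimately interpret bridge_contraction L G "contract_arc G e" e "tail G e" "head G e"
      "\<lambda>v. if v = head G e then tail G e else v" side
    using e by unfold_locales (auto simp: contract_arc_def Let_def side_def image_iff)
  have "propP L (contract_arc G e)"
    by (rule propP_of_minimal[OF minimal ms_contract[OF e] wf_digraph_contract_arc[OF e]
          connected_contract_arc[OF assms(1) e] e(1)])
      (simp add: contract_arc_def)
  then show False
    using propP_of_bridge_contraction minimal by (simp add: minimal_without_propP_def)
qed

end

theorem proposition3p3:
  fixes L :: "(nat word \<times> nat word) set" and G :: "('v,'e) pre_digraph"
  assumes "fin_digraph G" and "connected G" and "\<not> propP L G"
    and "\<forall>D :: ('v,'e) pre_digraph. is_minor D G \<and> connected D \<and> \<not> propP L D \<longrightarrow> is_minor G D"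
  shows "two_edge_connected G \<and> (\<forall>e \<in> arcs G. tail G e \<noteq> head G e)"
proof -
  interpret fin_digraph G by fact
  have minimal: "minimal_without_propP L G"
    using assms(3,4) by (simp add: minimal_without_propP_def)
  have no_loop: "\<forall>e \<in> arcs G. tail G e \<noteq> head G e"
    using minimal_without_propP_no_loop[OF assms(2) minimal] by blast
  then have "\<forall>e \<in> arcs G. connected (del_arc e)"
    using minimal_without_propP_no_bridge[OF assms(2) minimal] by blast
  then show ?thesis
    using no_loop assms(2) by (simp add: two_edge_connected_def)
qed

end
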